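(* Let $X$ be a Fréchet space, $(T(t))_{t\geqslant0}$ an exponentially equicontinuous $C_0$-semigroup on $X$, and let $\Gamma$ be a fundamental system of seminorms for $X$ for which there exist $\omega\in\mathbb{R}$ and $M\geqslant1$ with $q(T(t)x)\leqslant Me^{\omega t}q(x)$ for all $q\in\Gamma$, $t\geqslant0$, $x\in X$. Then for every $t_0>0$, \[\omega_{0,\Gamma}(T)=\inf_{t>0}\tfrac{1}{t}\log\|T(t)\|_\Gamma=\lim_{t\to\infty}\tfrac1t\log\|T(t)\|_\Gamma=\tfrac{1}{t_0}\log\Big(\lim_{n\to\infty}\|T(t_0)^n\|_\Gamma^{1/n}\Big).\]
   Context: A Fréchet space is a complete metrizable locally convex space; a fundamental system of seminorms is a set of continuous seminorms generating the topology. A $C_0$-semigroup is a family $(T(t))_{t\geqslant0}$ of continuous linear operators on $X$ with $T(0)=\mathrm{id}_X$, $T(t+s)=T(t)T(s)$, and $t\mapsto T(t)x$ continuous for every $x$; it is exponentially equicontinuous if for some $\omega\in\mathbb{R}$ the family $\{e^{-\omega t}T(t)\}_{t\geqslant0}$ is equicontinuous. For $S\in L(X)$ put $\|S\|_\Gamma=\sup_{q\in\Gamma}\sup_{x\in X,\,q(x)\leqslant1}q(Sx)$. Define \[\omega_{0,\Gamma}(T)=\inf\{\omega\in\mathbb{R}: \exists M\geqslant1\ \forall q\in\Gamma,\,t\geqslant0,\,x\in X:\ q(T(t)x)\leqslant Me^{\omega t}q(x)\}.\] *)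

theory Defs
  imports "HOL-Analysis.Analysis"
begin

text \<open>A Frechet space is modelled as a real vector space 'a equipped with a countable
  separating family of seminorms p :: nat => 'a => real generating its (metrizable, locally
  convex) topology, such that the space is sequentially complete for this family.\<close>

definition seminorm :: "('a::real_vector \<Rightarrow> real) \<Rightarrow> bool" where
  "seminorm q \<longleftrightarrow> (\<forall>x. 0 \<le> q x) \<and> (\<forall>c x. q (c *\<^sub>R x) = \<bar>c\<bar> * q x)
     \<and> (\<forall>x y. q (x + y) \<le> q x + q y)"

definition frechet :: "(nat \<Rightarrow> 'a::real_vector \<Rightarrow> real) \<Rightarrow> bool" where
  "frechet p \<longleftrightarrow> (\<forall>n. seminorm (p n)) \<and> (\<forall>x. (\<forall>n. p n x = 0) \<longrightarrow> x = 0)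
     \<and> (\<forall>X :: nat \<Rightarrow> 'a.
          (\<forall>n e. e > 0 \<longrightarrow> (\<exists>N. \<forall>i\<ge>N. \<forall>j\<ge>N. p n (X i - X j) < e))
          \<longrightarrow> (\<exists>x. \<forall>n. (\<lambda>i. p n (X i - x)) \<longlonglongrightarrow> 0))"

definition continuous_seminorm :: "(nat \<Rightarrow> 'a::real_vector \<Rightarrow> real) \<Rightarrow> ('a \<Rightarrow> real) \<Rightarrow> bool" where
  "continuous_seminorm p q \<longleftrightarrow> seminorm q \<and> (\<exists>C m. \<forall>x. q x \<le> C * (\<Sum>k\<le>m. p k x))"

definition fundamental_system :: "(nat \<Rightarrow> 'a::real_vector \<Rightarrow> real) \<Rightarrow> ('a \<Rightarrow> real) set \<Rightarrow> bool" where
  "fundamental_system p \<Gamma> \<longleftrightarrow> (\<forall>q\<in>\<Gamma>. continuous_seminorm p q)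
     \<and> (\<forall>n. \<exists>F C. finite F \<and> F \<subseteq> \<Gamma> \<and> (\<forall>x. p n x \<le> C * (\<Sum>q\<in>F. q x)))"

definition continuous_linear :: "(nat \<Rightarrow> 'a::real_vector \<Rightarrow> real) \<Rightarrow> ('a \<Rightarrow> 'a) \<Rightarrow> bool" where
  "continuous_linear p S \<longleftrightarrow> linear S \<and> (\<forall>n. \<exists>C m. \<forall>x. p n (S x) \<le> C * (\<Sum>k\<le>m. p k x))"

definition C0_semigroup :: "(nat \<Rightarrow> 'a::real_vector \<Rightarrow> real) \<Rightarrow> (real \<Rightarrow> 'a \<Rightarrow> 'a) \<Rightarrow> bool" where
  "C0_semigroup p T \<longleftrightarrow> (\<forall>t\<ge>0. continuous_linear p (T t)) \<and> T 0 = id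
     \<and> (\<forall>t s. t \<ge> 0 \<longrightarrow> s \<ge> 0 \<longrightarrow> T (t + s) = T t \<circ> T s)
     \<and> (\<forall>x s n. s \<ge> 0 \<longrightarrow> ((\<lambda>t. p n (T t x - T s x)) \<longlongrightarrow> 0) (at s within {0..}))"

definition exp_equicontinuous :: "(nat \<Rightarrow> 'a::real_vector \<Rightarrow> real) \<Rightarrow> (real \<Rightarrow> 'a \<Rightarrow> 'a) \<Rightarrow> bool" where
  "exp_equicontinuous p T \<longleftrightarrow> (\<exists>\<omega>::real. \<forall>n. \<exists>C m. \<forall>t\<ge>0. \<forall>x.
      p n (exp (- \<omega> * t) *\<^sub>R T t x) \<le> C * (\<Sum>k\<le>m. p k x))"

text \<open>The Gamma-operator norm, with value in the extended reals (it may be infinite);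
  0 is included so that the supremum of nonnegative quantities over an empty index is 0.\<close>
definition opnormG :: "('a \<Rightarrow> real) set \<Rightarrow> ('a \<Rightarrow> 'a) \<Rightarrow> ereal" where
  "opnormG \<Gamma> S = Sup (insert 0 {ereal (q (S x)) | q x. q \<in> \<Gamma> \<and> q x \<le> 1})"

definition growth_bound :: "('a \<Rightarrow> real) set \<Rightarrow> (real \<Rightarrow> 'a \<Rightarrow> 'a) \<Rightarrow> ereal" where
  "growth_bound \<Gamma> T = Inf {ereal \<omega> | \<omega>. \<exists>M\<ge>1. \<forall>q\<in>\<Gamma>. \<forall>t\<ge>0. \<forall>x.
      q (T t x) \<le> M * exp (\<omega> * t) * q x}"

definition eln :: "ereal \<Rightarrow> ereal" where
  "eln x = (if x \<le> 0 then - \<infinity> else if x = \<infinity> then \<infinity> else ereal (ln (real_of_ereal x)))"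

definition eroot :: "nat \<Rightarrow> ereal \<Rightarrow> ereal" where
  "eroot n x = (if x = \<infinity> then \<infinity> else ereal (root n (real_of_ereal x)))"

end

theory Submission
  imports Defs
begin

text \<open>Put N(t) = ||T(t)||_Gamma. The estimate q(T(t)x) <= K e^(ct) q(x) for all q in Gamma is
  equivalent to N(t) <= K e^(ct), and N is submultiplicative. If N(t1) <= e^(c t1) for a single
  t1 > 0, writing t = n t1 + r with 0 <= r < t1 and bounding N(r) by the a priori estimate M e^(omega r)
  gives N(t) <= K e^(ct) for all t >= 0. Hence every c above inf_t ln N(t)/t is an admissible
  exponent, which identifies the growth bound with this infimum and, as in Fekete's lemma, with the
  limit of ln N(t)/t; along t = n t0 that limit is the limit of N(n t0)^(1/n).\<close>

lemma opnormG_nonneg: "0 \<le> opnormG \<Gamma> S"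
  unfolding opnormG_def by (rule Sup_upper) simp

lemma seminorm_bound_of_unit_ball:
  assumes "seminorm q" and "linear S" and "K \<ge> 0"
    and unit: "\<And>y. q y \<le> 1 \<Longrightarrow> q (S y) \<le> K"
  shows "q (S x) \<le> K * q x"
proof -
  have scale: "q (S (c *\<^sub>R y)) = \<bar>c\<bar> * q (S y)" "q (c *\<^sub>R y) = \<bar>c\<bar> * q y" for c y
    using assms(1,2) by (simp_all add: linear_scale seminorm_def)
  have "0 \<le> q x" using assms(1) by (simp add: seminorm_def)
  then consider "q x > 0" | "q x = 0" by linarith
  then show ?thesis
  proof cases
    case 1
    then have "q (S ((1 / q x) *\<^sub>R x)) \<le> K" by (intro unit) (simp add: scale)
    with 1 show ?thesis by (simp add: scale field_simps)
  next
    case 2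
    show ?thesis
    proof (rule ccontr)
      assume "\<not> ?thesis"
      with 2 have pos: "q (S x) > 0" by simp
      define c where "c = (K + 1) / q (S x)"
      have "q (S (c *\<^sub>R x)) \<le> K" by (intro unit) (simp add: scale 2)
      moreover have "q (S (c *\<^sub>R x)) = K + 1" using pos \<open>K \<ge> 0\<close> by (simp add: scale c_def)
      ultimately show False by simp
    qed
  qed
qed

lemma opnormG_le_iff:
  assumes "linear S" and "\<And>q. q \<in> \<Gamma> \<Longrightarrow> seminorm q" and "K \<ge> 0"
  shows "opnormG \<Gamma> S \<le> ereal K \<longleftrightarrow> (\<forall>q\<in>\<Gamma>. \<forall>x. q (S x) \<le> K * q x)"
proof
  assume le: "opnormG \<Gamma> S \<le> ereal K"
  show "\<forall>q\<in>\<Gamma>. \<forall>x. q (S x) \<le> K * q x"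
  proof (intro ballI allI)
    fix q x assume q: "q \<in> \<Gamma>"
    have "q (S y) \<le> K" if "q y \<le> 1" for y
    proof -
      have "ereal (q (S y)) \<le> opnormG \<Gamma> S"
        unfolding opnormG_def by (rule Sup_upper) (use that q in blast)
      then have "ereal (q (S y)) \<le> ereal K" using le by (rule order_trans)
      then show ?thesis by simp
    qed
    then show "q (S x) \<le> K * q x"
      using seminorm_bound_of_unit_ball assms q by blast
  qed
next
  assume bound: "\<forall>q\<in>\<Gamma>. \<forall>x. q (S x) \<le> K * q x"
  show "opnormG \<Gamma> S \<le> ereal K"
    unfolding opnormG_def
  proof (rule Sup_least, elim insertE CollectE exE conjE)
    fix q x assume "q \<in> \<Gamma>" "q x \<le> 1"
    with bound \<open>K \<ge> 0\<close> have "q (S x) \<le> K"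
      by (meson mult_left_le order_trans)
    then show "y = ereal (q (S x)) \<Longrightarrow> y \<le> ereal K" for y by simp
  qed (use \<open>K \<ge> 0\<close> in simp)
qed

lemma ereal_div_mult_eln:
  assumes "t > 0" and "x \<ge> 0"
  shows "ereal (1 / t) * eln (ereal x) = (if x = 0 then - \<infinity> else ereal (ln x / t))"
  using assms by (simp add: eln_def)

lemma funpow_semigroup:
  assumes "T 0 = id" and "\<And>t s. t \<ge> 0 \<Longrightarrow> s \<ge> 0 \<Longrightarrow> T (t + s) = T t \<circ> T s" and "t0 \<ge> 0"
  shows "T t0 ^^ n = T (real n * t0)"
proof (induction n)
  case (Suc n)
  then have "T t0 ^^ Suc n = T (t0 + real n * t0)" using assms(2,3) by simp
  then show ?case by (simp add: algebra_simps)
qed (simp add: assms(1))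

locale exp_bounded_submultiplicative =
  fixes N :: "real \<Rightarrow> real" and M \<omega> :: real
  assumes nonneg: "t \<ge> 0 \<Longrightarrow> 0 \<le> N t"
    and submult: "s \<ge> 0 \<Longrightarrow> t \<ge> 0 \<Longrightarrow> N (s + t) \<le> N s * N t"
    and exp_bound: "t \<ge> 0 \<Longrightarrow> N t \<le> M * exp (\<omega> * t)"
    and M_pos: "M > 0"
begin

definition log_rate :: "real \<Rightarrow> ereal" where
  "log_rate t = ereal (1 / t) * eln (ereal (N t))"

definition growth_rate :: ereal where
  "growth_rate = (INF t\<in>{0<..}. log_rate t)"

lemma log_rate_eq: "t > 0 \<Longrightarrow> log_rate t = (if N t = 0 then - \<infinity> else ereal (ln (N t) / t))"
  unfolding log_rate_def by (simp add: ereal_div_mult_eln nonneg)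

lemma growth_rate_le_log_rate: "t > 0 \<Longrightarrow> growth_rate \<le> log_rate t"
  unfolding growth_rate_def by (rule INF_lower) simp

lemma N_multiple_le: "t \<ge> 0 \<Longrightarrow> r \<ge> 0 \<Longrightarrow> N (real n * t + r) \<le> N t ^ n * N r"
proof (induction n)
  case (Suc n)
  have "N (real (Suc n) * t + r) = N (t + (real n * t + r))" by (simp add: algebra_simps)
  also have "\<dots> \<le> N t * N (real n * t + r)" using Suc.prems by (intro submult) auto
  also have "\<dots> \<le> N t * (N t ^ n * N r)" using Suc nonneg by (simp add: mult_left_mono)
  finally show ?case by simp
qed simp

lemma log_rate_le:
  assumes "t > 0" "K > 0" "N t \<le> K * exp (c * t)"
  shows "log_rate t \<le> ereal (ln K / t + c)"
proof (cases "N t = 0")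
  case False
  with nonneg assms(1) have "N t > 0" by (simp add: less_le)
  with assms have "ln (N t) \<le> ln (K * exp (c * t))" by simp
  also have "\<dots> = ln K + c * t" using assms(2) by (simp add: ln_mult)
  finally have "ln (N t) / t \<le> (ln K + c * t) / t" using assms(1) by (simp add: divide_right_mono)
  also have "\<dots> = ln K / t + c" using assms(1) by (simp add: add_divide_distrib)
  finally show ?thesis using assms(1) False by (simp add: log_rate_eq)
qed (simp add: log_rate_eq assms)

lemma growth_rate_le:
  assumes K: "K > 0" and bound: "\<forall>t\<ge>0. N t \<le> K * exp (c * t)"
  shows "growth_rate \<le> ereal c"
proof (rule ereal_le_epsilon2)
  fix e :: real assume "e > 0"
  define t where "t = \<bar>ln K\<bar> / e + 1"
  have "e * t = \<bar>ln K\<bar> + e" unfolding t_def using \<open>e > 0\<close> by (simp add: distrib_left)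
  then have "ln K < e * t" using \<open>e > 0\<close> abs_ge_self[of "ln K"] by linarith
  moreover have "t > 0" unfolding t_def using \<open>e > 0\<close> by (simp add: add_nonneg_pos)
  ultimately have t: "t > 0" "ln K / t < e" by (simp_all add: pos_divide_less_eq mult.commute)
  have "growth_rate \<le> log_rate t" using t(1) by (rule growth_rate_le_log_rate)
  also have "\<dots> \<le> ereal (ln K / t + c)" using t K bound by (intro log_rate_le) auto
  also have "\<dots> \<le> ereal c + ereal e" using t by simp
  finally show "growth_rate \<le> ereal c + ereal e" .
qed

lemma growth_rate_le_\<omega>: "growth_rate \<le> ereal \<omega>"
  using M_pos exp_bound by (intro growth_rate_le) auto

lemma exp_bound_of_single_time:
  assumes t1: "t1 > 0" and Nt1: "N t1 \<le> exp (c * t1)"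
  shows "\<exists>K>0. \<forall>t\<ge>0. N t \<le> K * exp (c * t)"
proof (intro exI conjI allI impI)
  define K where "K = M * exp (\<bar>\<omega>\<bar> * t1) * exp (\<bar>c\<bar> * t1)"
  show "K > 0" unfolding K_def using M_pos by simp
  fix t :: real assume "t \<ge> 0"
  define n where "n = nat \<lfloor>t / t1\<rfloor>"
  define r where "r = t - real n * t1"
  have "real n = of_int \<lfloor>t / t1\<rfloor>" unfolding n_def using \<open>t \<ge> 0\<close> t1 by simp
  then have "real n \<le> t / t1" "t / t1 < real n + 1" by linarith+
  then have r: "0 \<le> r" "r < t1" unfolding r_def using t1 by (simp_all add: field_simps)
  have rem: "\<bar>\<omega>\<bar> * r \<le> \<bar>\<omega>\<bar> * t1" "\<bar>c\<bar> * r \<le> \<bar>c\<bar> * t1"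
    using r by (simp_all add: mult_left_mono)
  have pow: "exp (c * t1) ^ n \<le> exp (c * t + \<bar>c\<bar> * t1)"
  proof -
    have "- c * r \<le> \<bar>c\<bar> * r" using r(1) by (intro mult_right_mono) auto
    with rem(2) have "c * t - c * r \<le> c * t + \<bar>c\<bar> * t1" by simp
    then show ?thesis unfolding r_def by (simp add: exp_of_nat_mult[symmetric] algebra_simps)
  qed
  have "N t = N (real n * t1 + r)" unfolding r_def by simp
  also have "\<dots> \<le> N t1 ^ n * N r" using t1 r by (intro N_multiple_le) auto
  also have "\<dots> \<le> exp (c * t1) ^ n * (M * exp (\<bar>\<omega>\<bar> * t1))"
  proof (intro mult_mono power_mono)
    have "\<omega> * r \<le> \<bar>\<omega>\<bar> * r" using r(1) by (intro mult_right_mono) auto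
    with rem(1) have "exp (\<omega> * r) \<le> exp (\<bar>\<omega>\<bar> * t1)" by simp
    then show "N r \<le> M * exp (\<bar>\<omega>\<bar> * t1)"
      using exp_bound[OF r(1)] M_pos by (meson mult_left_mono less_imp_le order_trans)
  qed (use Nt1 nonneg t1 r in auto)
  also have "\<dots> \<le> exp (c * t + \<bar>c\<bar> * t1) * (M * exp (\<bar>\<omega>\<bar> * t1))"
    using pow M_pos by (intro mult_right_mono) auto
  finally show "N t \<le> K * exp (c * t)" unfolding K_def by (simp add: exp_add algebra_simps)
qed

lemma exp_bound_above_growth_rate:
  assumes "growth_rate < ereal c"
  shows "\<exists>K>0. \<forall>t\<ge>0. N t \<le> K * exp (c * t)"
proof -
  obtain t1 where t1: "t1 > 0" "log_rate t1 < ereal c"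
    using assms unfolding growth_rate_def by (metis INF_less_iff greaterThan_iff)
  have "N t1 \<le> exp (c * t1)"
  proof (cases "N t1 = 0")
    case False
    with t1 have "ln (N t1) < c * t1" by (simp add: log_rate_eq field_simps)
    with False nonneg[of t1] t1 show ?thesis
      by (metis exp_ln exp_less_mono less_eq_real_def)
  qed simp
  with t1 show ?thesis by (intro exp_bound_of_single_time)
qed

lemma growth_rate_eq_Inf_exp_bounds:
  "growth_rate = Inf {ereal c | c. \<exists>K\<ge>1. \<forall>t\<ge>0. N t \<le> K * exp (c * t)}"
    (is "_ = Inf ?B")
proof (rule antisym)
  show "growth_rate \<le> Inf ?B"
  proof (rule Inf_greatest)
    fix y assume "y \<in> ?B"
    then obtain c K where "y = ereal c" "K \<ge> 1" "\<forall>t\<ge>0. N t \<le> K * exp (c * t)" by blast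
    then show "growth_rate \<le> y" using growth_rate_le[of K c] by simp
  qed
  have mem: "ereal c \<in> ?B" if "growth_rate < ereal c" for c
  proof -
    obtain K where "K > 0" "\<forall>t\<ge>0. N t \<le> K * exp (c * t)"
      using exp_bound_above_growth_rate \<open>growth_rate < ereal c\<close> by blast
    then have "\<forall>t\<ge>0. N t \<le> max 1 K * exp (c * t)"
      by (meson max.cobounded2 exp_ge_zero mult_right_mono order_trans)
    then show ?thesis by (intro CollectI exI[of _ c]) (auto intro!: exI[of _ "max 1 K"])
  qed
  show "Inf ?B \<le> growth_rate"
  proof (rule ccontr)
    assume "\<not> Inf ?B \<le> growth_rate"
    then have "growth_rate < Inf ?B" by simp
    then obtain c where "growth_rate < ereal c" "ereal c < Inf ?B" using ereal_dense2 by blast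
    then show False using Inf_lower[OF mem] leD by blast
  qed
qed

lemma tendsto_log_rate: "(log_rate \<longlongrightarrow> growth_rate) at_top"
proof (rule order_tendstoI)
  fix a assume a: "a < growth_rate"
  show "\<forall>\<^sub>F t in at_top. a < log_rate t"
    using eventually_gt_at_top[of 0]
    by eventually_elim (meson a growth_rate_le_log_rate order_less_le_trans)
next
  fix a assume "growth_rate < a"
  then obtain c where c: "growth_rate < ereal c" "ereal c < a" using ereal_dense2 by blast
  then obtain c' where c': "growth_rate < ereal c'" "c' < c" using ereal_dense2 by force
  then obtain K where K: "K > 0" "\<forall>t\<ge>0. N t \<le> K * exp (c' * t)"
    using exp_bound_above_growth_rate by blast
  have "((\<lambda>t. ln K / t) \<longlongrightarrow> 0) at_top"
    by (intro tendsto_divide_0[OF tendsto_const] filterlim_at_top_imp_at_infinity filterlim_ident)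
  then have "\<forall>\<^sub>F t in at_top. ln K / t < c - c'"
    using c' by (intro order_tendstoD(2)) auto
  then show "\<forall>\<^sub>F t in at_top. log_rate t < a"
    using eventually_gt_at_top[of 0]
  proof eventually_elim
    case (elim t)
    then have "log_rate t \<le> ereal (ln K / t + c')" using K by (intro log_rate_le) auto
    also have "\<dots> < ereal c" using elim by simp
    also have "\<dots> < a" by (fact c(2))
    finally show ?case .
  qed
qed

lemma root_less_iff_log_rate_less:
  assumes "n > 0" "t0 > 0" "r > 0"
  shows "root n (N (real n * t0)) < r \<longleftrightarrow> log_rate (real n * t0) < ereal (ln r / t0)"
proof -
  let ?x = "N (real n * t0)"
  have x: "?x \<ge> 0" using assms nonneg by simp
  have "root n ?x < r \<longleftrightarrow> ?x < r ^ n"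
    using assms x by (metis real_root_less_iff real_root_power_cancel less_eq_real_def)
  also have "\<dots> \<longleftrightarrow> log_rate (real n * t0) < ereal (ln r / t0)"
  proof (cases "?x = 0")
    case False
    with x have "?x < r ^ n \<longleftrightarrow> ln ?x < real n * ln r"
      using assms by (simp add: ln_realpow[symmetric])
    also have "\<dots> \<longleftrightarrow> ln ?x / (real n * t0) < ln r / t0"
      using assms by (simp add: field_simps)
    finally show ?thesis using False assms by (simp add: log_rate_eq)
  qed (use assms in \<open>simp add: log_rate_eq\<close>)
  finally show ?thesis .
qed

lemma less_root_iff_less_log_rate:
  assumes "n > 0" "t0 > 0" "r > 0"
  shows "r < root n (N (real n * t0)) \<longleftrightarrow> ereal (ln r / t0) < log_rate (real n * t0)"
proof -
  let ?x = "N (real n * t0)"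
  have x: "?x \<ge> 0" using assms nonneg by simp
  have "r < root n ?x \<longleftrightarrow> r ^ n < ?x"
    using assms x by (metis real_root_less_iff real_root_power_cancel less_eq_real_def)
  also have "\<dots> \<longleftrightarrow> ereal (ln r / t0) < log_rate (real n * t0)"
  proof (cases "?x = 0")
    case False
    with x have "r ^ n < ?x \<longleftrightarrow> real n * ln r < ln ?x"
      using assms by (simp add: ln_realpow[symmetric])
    also have "\<dots> \<longleftrightarrow> ln r / t0 < ln ?x / (real n * t0)"
      using assms by (simp add: field_simps)
    finally show ?thesis using False assms by (simp add: log_rate_eq)
  qed (use assms in \<open>simp add: log_rate_eq\<close>)
  finally show ?thesis .
qed

lemma tendsto_root_N_multiple:
  assumes t0: "t0 > 0"
  shows "\<exists>L. (\<lambda>n. ereal (root n (N (real n * t0)))) \<longlonglongrightarrow> L \<and> growth_rate = ereal (1 / t0) * eln L"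
proof (intro exI conjI)
  define L where "L = (if growth_rate = - \<infinity> then 0 else ereal (exp (t0 * real_of_ereal growth_rate)))"
  have finite_rate: "growth_rate \<noteq> \<infinity>" using growth_rate_le_\<omega> by auto
  have "0 \<le> L" unfolding L_def by simp
  have less_L_iff: "ereal r < L \<longleftrightarrow> ereal (ln r / t0) < growth_rate"
    and L_less_iff: "L < ereal r \<longleftrightarrow> growth_rate < ereal (ln r / t0)" if "r > 0" for r
  proof -
    have "r < exp y \<longleftrightarrow> ln r < y" "exp y < r \<longleftrightarrow> y < ln r" for y
      using that by (metis exp_less_cancel_iff exp_ln)+
    then show "ereal r < L \<longleftrightarrow> ereal (ln r / t0) < growth_rate"
      and "L < ereal r \<longleftrightarrow> growth_rate < ereal (ln r / t0)"
      using finite_rate that t0 unfolding L_def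
      by (cases growth_rate; simp add: pos_divide_less_eq pos_less_divide_eq mult.commute)+
  qed
  have "filterlim (\<lambda>n. real n * t0) at_top sequentially"
    by (rule filterlim_at_top_mult_tendsto_pos[OF tendsto_const t0 filterlim_real_sequentially])
  then have rates: "(\<lambda>n. log_rate (real n * t0)) \<longlonglongrightarrow> growth_rate"
    by (rule filterlim_compose[OF tendsto_log_rate])
  show "(\<lambda>n. ereal (root n (N (real n * t0)))) \<longlonglongrightarrow> L"
  proof (rule order_tendstoI)
    fix a assume "a < L"
    show "\<forall>\<^sub>F n in sequentially. a < ereal (root n (N (real n * t0)))"
    proof (cases "a < 0")
      case True
      have "0 \<le> root n (N (real n * t0))" for n using nonneg t0 by (simp add: real_root_ge_zero)
      with True show ?thesis by (intro always_eventually allI) (meson ereal_less_eq(5) order_less_le_trans)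
    next
      case False
      obtain r where r: "a < ereal r" "ereal r < L" using \<open>a < L\<close> ereal_dense2 by blast
      have "0 < ereal r" using False r(1) by (meson not_less order_le_less_trans)
      then have "r > 0" by simp
      with r have "\<forall>\<^sub>F n in sequentially. ereal (ln r / t0) < log_rate (real n * t0)"
        using less_L_iff by (intro order_tendstoD(1)[OF rates]) auto
      then show ?thesis using eventually_gt_at_top[of "0::nat"]
      proof eventually_elim
        case (elim n)
        then have "ereal r < ereal (root n (N (real n * t0)))"
          using less_root_iff_less_log_rate[of n t0 r] \<open>r > 0\<close> t0 by simp
        with r(1) show ?case by (rule order_less_trans)
      qed
    qed
  next
    fix a assume "L < a"
    obtain r where r: "L < ereal r" "ereal r < a" using \<open>L < a\<close> ereal_dense2 by blast
    have "0 < ereal r" using \<open>0 \<le> L\<close> r(1) by (rule order_le_less_trans)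
    then have "r > 0" by simp
    with r have "\<forall>\<^sub>F n in sequentially. log_rate (real n * t0) < ereal (ln r / t0)"
      using L_less_iff by (intro order_tendstoD(2)[OF rates]) auto
    then show "\<forall>\<^sub>F n in sequentially. ereal (root n (N (real n * t0))) < a"
      using eventually_gt_at_top[of "0::nat"]
    proof eventually_elim
      case (elim n)
      then have "ereal (root n (N (real n * t0))) < ereal r"
        using root_less_iff_log_rate_less[of n t0 r] \<open>r > 0\<close> t0 by simp
      then show ?case using r(2) by (rule order_less_trans)
    qed
  qed
  show "growth_rate = ereal (1 / t0) * eln L"
    using finite_rate t0 unfolding L_def eln_def by (cases growth_rate) auto
qed

end

locale Gamma_bounded_semigroup =
  fixes T :: "real \<Rightarrow> 'a::real_vector \<Rightarrow> 'a" and \<Gamma> :: "('a \<Rightarrow> real) set" and M \<omega> :: real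
  assumes linear_T: "t \<ge> 0 \<Longrightarrow> linear (T t)"
    and T_0: "T 0 = id"
    and T_add: "t \<ge> 0 \<Longrightarrow> s \<ge> 0 \<Longrightarrow> T (t + s) = T t \<circ> T s"
    and seminorm_Gamma: "q \<in> \<Gamma> \<Longrightarrow> seminorm q"
    and M_gt_0: "M > 0"
    and Gamma_bound: "q \<in> \<Gamma> \<Longrightarrow> t \<ge> 0 \<Longrightarrow> q (T t x) \<le> M * exp (\<omega> * t) * q x"
begin

definition opnorm :: "real \<Rightarrow> real" where
  "opnorm t = real_of_ereal (opnormG \<Gamma> (T t))"

lemma opnormG_eq_opnorm:
  assumes "t \<ge> 0"
  shows "opnormG \<Gamma> (T t) = ereal (opnorm t)"
proof -
  have "opnormG \<Gamma> (T t) \<le> ereal (M * exp (\<omega> * t))"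
    using Gamma_bound assms M_gt_0
    by (subst opnormG_le_iff[OF linear_T[OF assms] seminorm_Gamma]) (auto simp: less_imp_le)
  then show ?thesis using opnormG_nonneg[of \<Gamma> "T t"] unfolding opnorm_def
    by (cases "opnormG \<Gamma> (T t)") auto
qed

lemma opnorm_le_iff:
  assumes "t \<ge> 0" "K \<ge> 0"
  shows "opnorm t \<le> K \<longleftrightarrow> (\<forall>q\<in>\<Gamma>. \<forall>x. q (T t x) \<le> K * q x)"
proof -
  have "opnorm t \<le> K \<longleftrightarrow> opnormG \<Gamma> (T t) \<le> ereal K" using opnormG_eq_opnorm[OF assms(1)] by simp
  also have "\<dots> \<longleftrightarrow> (\<forall>q\<in>\<Gamma>. \<forall>x. q (T t x) \<le> K * q x)"
    by (rule opnormG_le_iff[OF linear_T[OF assms(1)] seminorm_Gamma assms(2)])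
  finally show ?thesis .
qed

lemma opnorm_nonneg: "t \<ge> 0 \<Longrightarrow> 0 \<le> opnorm t"
  using opnormG_eq_opnorm opnormG_nonneg by (metis ereal_less_eq(5) zero_ereal_def)

lemma seminorm_T_le_opnorm: "t \<ge> 0 \<Longrightarrow> q \<in> \<Gamma> \<Longrightarrow> q (T t x) \<le> opnorm t * q x"
  using opnorm_le_iff[OF _ opnorm_nonneg] by blast

sublocale exp_bounded_submultiplicative opnorm M \<omega>
proof
  show "0 \<le> opnorm t" if "t \<ge> 0" for t using opnorm_nonneg[OF that] .
  show "opnorm t \<le> M * exp (\<omega> * t)" if "t \<ge> 0" for t
    using opnorm_le_iff[OF that] Gamma_bound that M_gt_0 by (simp add: less_imp_le)
  show "M > 0" by (fact M_gt_0)
  fix s t :: real assume st: "s \<ge> 0" "t \<ge> 0"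
  have "q (T (s + t) x) \<le> opnorm s * opnorm t * q x" if q: "q \<in> \<Gamma>" for q x
  proof -
    have "q (T (s + t) x) = q (T s (T t x))" using T_add st by simp
    also have "\<dots> \<le> opnorm s * q (T t x)" by (rule seminorm_T_le_opnorm[OF st(1) q])
    also have "\<dots> \<le> opnorm s * (opnorm t * q x)"
      by (rule mult_left_mono[OF seminorm_T_le_opnorm[OF st(2) q] opnorm_nonneg[OF st(1)]])
    finally show ?thesis by simp
  qed
  moreover have "s + t \<ge> 0" "opnorm s * opnorm t \<ge> 0" using st opnorm_nonneg by auto
  ultimately show "opnorm (s + t) \<le> opnorm s * opnorm t"
    using opnorm_le_iff[of "s + t" "opnorm s * opnorm t"] by blast
qed

lemma growth_bound_eq_growth_rate: "growth_bound \<Gamma> T = growth_rate"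
proof -
  have "(\<forall>t\<ge>0. opnorm t \<le> K * exp (c * t))
      \<longleftrightarrow> (\<forall>q\<in>\<Gamma>. \<forall>t\<ge>0. \<forall>x. q (T t x) \<le> K * exp (c * t) * q x)" if "K \<ge> 1" for K c
  proof -
    have "opnorm t \<le> K * exp (c * t) \<longleftrightarrow> (\<forall>q\<in>\<Gamma>. \<forall>x. q (T t x) \<le> K * exp (c * t) * q x)"
      if "t \<ge> 0" for t
      using \<open>K \<ge> 1\<close> by (intro opnorm_le_iff that) simp
    then show ?thesis by blast
  qed
  then show ?thesis
    unfolding growth_bound_def growth_rate_eq_Inf_exp_bounds
    by (intro arg_cong[where f = Inf]) blast
qed

lemma log_rate_eq_opnormG: "t > 0 \<Longrightarrow> log_rate t = ereal (1 / t) * eln (opnormG \<Gamma> (T t))"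
  by (simp add: log_rate_def opnormG_eq_opnorm)

lemma eroot_opnormG_funpow:
  "t0 \<ge> 0 \<Longrightarrow> eroot n (opnormG \<Gamma> (T t0 ^^ n)) = ereal (root n (opnorm (real n * t0)))"
  by (simp add: funpow_semigroup[OF T_0 T_add] opnormG_eq_opnorm eroot_def)

end

theorem proposition2p4:
  fixes p :: "nat \<Rightarrow> 'a::real_vector \<Rightarrow> real"
    and T :: "real \<Rightarrow> 'a \<Rightarrow> 'a"
    and \<Gamma> :: "('a \<Rightarrow> real) set"
    and \<omega> M t0 :: real
  assumes "frechet p"
    and "C0_semigroup p T"
    and "exp_equicontinuous p T"
    and "fundamental_system p \<Gamma>"
    and "M \<ge> 1"
    and "\<forall>q\<in>\<Gamma>. \<forall>t\<ge>0. \<forall>x. q (T t x) \<le> M * exp (\<omega> * t) * q x"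
    and "t0 > 0"
  shows "growth_bound \<Gamma> T = (INF t\<in>{0<..}. ereal (1 / t) * eln (opnormG \<Gamma> (T t)))
    \<and> ((\<lambda>t. ereal (1 / t) * eln (opnormG \<Gamma> (T t))) \<longlongrightarrow> growth_bound \<Gamma> T) at_top
    \<and> (\<exists>L. (\<lambda>n. eroot n (opnormG \<Gamma> (T t0 ^^ n))) \<longlonglongrightarrow> L
           \<and> growth_bound \<Gamma> T = ereal (1 / t0) * eln L)"
proof -
  from assms(2) have lin: "\<And>t. t \<ge> 0 \<Longrightarrow> linear (T t)" and T_0: "T 0 = id"
    and T_add: "\<And>t s. t \<ge> 0 \<Longrightarrow> s \<ge> 0 \<Longrightarrow> T (t + s) = T t \<circ> T s"
    unfolding C0_semigroup_def continuous_linear_def by blast+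
  from assms(4) have sn: "\<And>q. q \<in> \<Gamma> \<Longrightarrow> seminorm q"
    unfolding fundamental_system_def continuous_seminorm_def by blast
  interpret Gamma_bounded_semigroup T \<Gamma> M \<omega>
    by (rule Gamma_bounded_semigroup.intro) (use lin T_0 T_add sn assms(5,6) in auto)
  have "\<forall>\<^sub>F t in at_top. log_rate t = ereal (1 / t) * eln (opnormG \<Gamma> (T t))"
    using eventually_gt_at_top[of 0] by eventually_elim (rule log_rate_eq_opnormG)
  from tendsto_cong[OF this] tendsto_log_rate
  have "((\<lambda>t. ereal (1 / t) * eln (opnormG \<Gamma> (T t))) \<longlongrightarrow> growth_rate) at_top" by simp
  moreover have "growth_rate = (INF t\<in>{0<..}. ereal (1 / t) * eln (opnormG \<Gamma> (T t)))"
    unfolding growth_rate_def by (rule INF_cong) (simp_all add: log_rate_eq_opnormG)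
  moreover have "\<exists>L. (\<lambda>n. eroot n (opnormG \<Gamma> (T t0 ^^ n))) \<longlonglongrightarrow> L
      \<and> growth_rate = ereal (1 / t0) * eln L"
    using tendsto_root_N_multiple[OF assms(7)] assms(7) by (simp add: eroot_opnormG_funpow)
  ultimately show ?thesis by (simp add: growth_bound_eq_growth_rate)
qed

end
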